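(* Let $L$ be a $\kappa$-frame. Every quotient $L/C$ ($C\in\mathbb{C}L$) of $L$ is d-reduced if and only if $L$ is Boolean (every element of $L$ has a complement).
   Context: $\kappa$ is a fixed regular cardinal; a $\kappa$-frame is a bounded distributive lattice having joins of all subsets of cardinality $<\kappa$ and satisfying the frame distributive law for such joins. A congruence is an equivalence relation that is a sub-$\kappa$-frame of $L\times L$; $\mathbb{C}L$ is the set of congruences and $L/C$ the quotient $\kappa$-frame. A $\kappa$-frame $M$ is d-reduced if $\mathfrak{D}_M=\{(a,b)\mid\forall x\in M:\ a\wedge x=0\iff b\wedge x=0\}$ is the diagonal. *)

theory Defs
  imports Main
begin

text \<open>The regular cardinal kappa is a cardinal order relation k.\<close>

record 'a frm =
  carrier :: "'a set"
  le :: "'a \<Rightarrow> 'a \<Rightarrow> bool"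

definition is_lub :: "'a frm \<Rightarrow> 'a set \<Rightarrow> 'a \<Rightarrow> bool" where
  "is_lub L S j \<longleftrightarrow> j \<in> carrier L \<and> (\<forall>s\<in>S. le L s j) \<and>
     (\<forall>u\<in>carrier L. (\<forall>s\<in>S. le L s u) \<longrightarrow> le L j u)"

definition is_glb :: "'a frm \<Rightarrow> 'a set \<Rightarrow> 'a \<Rightarrow> bool" where
  "is_glb L S m \<longleftrightarrow> m \<in> carrier L \<and> (\<forall>s\<in>S. le L m s) \<and>
     (\<forall>u\<in>carrier L. (\<forall>s\<in>S. le L u s) \<longrightarrow> le L u m)"

definition fjoin :: "'a frm \<Rightarrow> 'a set \<Rightarrow> 'a" where
  "fjoin L S = (THE j. is_lub L S j)"

definition fmeet :: "'a frm \<Rightarrow> 'a \<Rightarrow> 'a \<Rightarrow> 'a" where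
  "fmeet L a b = (THE m. is_glb L {a, b} m)"

definition fbot :: "'a frm \<Rightarrow> 'a" where
  "fbot L = fjoin L {}"

definition ftop :: "'a frm \<Rightarrow> 'a" where
  "ftop L = (THE t. is_glb L {} t)"

definition small :: "'k rel \<Rightarrow> 'b set \<Rightarrow> bool" where
  "small k S \<longleftrightarrow> (card_of S, k) \<in> ordLess"

definition kframe :: "'k rel \<Rightarrow> 'a frm \<Rightarrow> bool" where
  "kframe k L \<longleftrightarrow>
     (\<forall>a\<in>carrier L. le L a a) \<and>
     (\<forall>a\<in>carrier L. \<forall>b\<in>carrier L. le L a b \<and> le L b a \<longrightarrow> a = b) \<and>
     (\<forall>a\<in>carrier L. \<forall>b\<in>carrier L. \<forall>c\<in>carrier L. le L a b \<and> le L b c \<longrightarrow> le L a c) \<and>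
     (\<exists>t. is_glb L {} t) \<and>
     (\<forall>a\<in>carrier L. \<forall>b\<in>carrier L. \<exists>m. is_glb L {a, b} m) \<and>
     (\<forall>S. S \<subseteq> carrier L \<and> small k S \<longrightarrow> (\<exists>j. is_lub L S j)) \<and>
     (\<forall>a\<in>carrier L. \<forall>S. S \<subseteq> carrier L \<and> small k S \<longrightarrow>
        fmeet L a (fjoin L S) = fjoin L ((\<lambda>s. fmeet L a s) ` S))"

text \<open>Congruence: an equivalence relation on the carrier that is a sub-kappa-frame
of L x L (operations in L x L being componentwise).\<close>
definition kcongruence :: "'k rel \<Rightarrow> 'a frm \<Rightarrow> ('a \<times> 'a) set \<Rightarrow> bool" where
  "kcongruence k L C \<longleftrightarrow>
     equiv (carrier L) C \<and>
     (ftop L, ftop L) \<in> C \<and>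
     (\<forall>a b c d. (a, b) \<in> C \<and> (c, d) \<in> C \<longrightarrow> (fmeet L a c, fmeet L b d) \<in> C) \<and>
     (\<forall>S. S \<subseteq> C \<and> small k S \<longrightarrow> (fjoin L (fst ` S), fjoin L (snd ` S)) \<in> C)"

definition quot :: "'a frm \<Rightarrow> ('a \<times> 'a) set \<Rightarrow> 'a set frm" where
  "quot L C = \<lparr> carrier = carrier L // C,
                le = (\<lambda>X Y. \<exists>a\<in>X. \<exists>b\<in>Y. (fmeet L a b, a) \<in> C) \<rparr>"

definition dcong :: "'a frm \<Rightarrow> ('a \<times> 'a) set" where
  "dcong M = {(a, b). a \<in> carrier M \<and> b \<in> carrier M \<and>
     (\<forall>x\<in>carrier M. fmeet M a x = fbot M \<longleftrightarrow> fmeet M b x = fbot M)}"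

definition d_reduced :: "'a frm \<Rightarrow> bool" where
  "d_reduced M \<longleftrightarrow> dcong M = Id_on (carrier M)"

definition boolean :: "'a frm \<Rightarrow> bool" where
  "boolean L \<longleftrightarrow> (\<forall>a\<in>carrier L. \<exists>b\<in>carrier L.
     fmeet L a b = fbot L \<and> fjoin L {a, b} = ftop L)"

end

theory Submission
  imports Defs
begin

text \<open>In L/C two classes [x], [y] have the same annihilators iff x and y have the same
annihilators modulo C. If L is Boolean, splitting x along a complement of y shows
x ~ x \<and> y, so equal annihilators force [x] = [y]. Conversely, for a \<in> L collapse the
annihilator ideal I = {i. a \<and> i = 0}: x ~ y iff x \<or> i = y \<or> i for some i \<in> I. In the
quotient [a] and [1] have the same annihilators, so if it is d-reduced then a ~ 1, i.e.
a \<or> i = 1 for some i with a \<and> i = 0.\<close>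

lemma small_finite: "Cinfinite k \<Longrightarrow> finite S \<Longrightarrow> small k S"
  unfolding small_def
  by (metis card_of_Well_order Field_card_of cinfinite_def card_order_on_well_order_on
      finite_ordLess_infinite)

lemma small_image: "small k S \<Longrightarrow> small k (f ` S)"
  unfolding small_def using card_of_image ordLeq_ordLess_trans by blast

definition antisymmetric_on_carrier :: "'a frm \<Rightarrow> bool" where
  "antisymmetric_on_carrier M \<longleftrightarrow>
     (\<forall>x\<in>carrier M. \<forall>y\<in>carrier M. le M x y \<and> le M y x \<longrightarrow> x = y)"

lemma the_glb_eq: "antisymmetric_on_carrier M \<Longrightarrow> is_glb M S m \<Longrightarrow> (THE m. is_glb M S m) = m"
  unfolding antisymmetric_on_carrier_def is_glb_def by (rule the_equality) blast+

lemma the_lub_eq: "antisymmetric_on_carrier M \<Longrightarrow> is_lub M S j \<Longrightarrow> (THE j. is_lub M S j) = j"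
  unfolding antisymmetric_on_carrier_def is_lub_def by (rule the_equality) blast+

locale kappa_frame =
  fixes k :: "'k rel" and L :: "'a frm"
  assumes cinfinite: "Cinfinite k" and kframe: "kframe k L"
begin

abbreviation leq (infix "\<sqsubseteq>" 50) where "x \<sqsubseteq> y \<equiv> le L x y"
abbreviation meet (infixl "\<sqinter>" 70) where "x \<sqinter> y \<equiv> fmeet L x y"
abbreviation join (infixl "\<squnion>" 65) where "x \<squnion> y \<equiv> fjoin L {x, y}"
abbreviation "A \<equiv> carrier L"
abbreviation "bt \<equiv> fbot L"
abbreviation "tp \<equiv> ftop L"

lemma leq_refl: "x \<in> A \<Longrightarrow> x \<sqsubseteq> x"
  using kframe unfolding kframe_def by (elim conjE) blast

lemma leq_antisym: "x \<in> A \<Longrightarrow> y \<in> A \<Longrightarrow> x \<sqsubseteq> y \<Longrightarrow> y \<sqsubseteq> x \<Longrightarrow> x = y"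
  using kframe unfolding kframe_def by (elim conjE) blast

lemma leq_trans: "x \<in> A \<Longrightarrow> y \<in> A \<Longrightarrow> z \<in> A \<Longrightarrow> x \<sqsubseteq> y \<Longrightarrow> y \<sqsubseteq> z \<Longrightarrow> x \<sqsubseteq> z"
  using kframe unfolding kframe_def by (elim conjE) blast

lemma antisymmetric: "antisymmetric_on_carrier L"
  unfolding antisymmetric_on_carrier_def using leq_antisym by blast

lemma small_pair: "small k {x, y}"
  by (rule small_finite[OF cinfinite]) simp

lemma fjoin_lub: "S \<subseteq> A \<Longrightarrow> small k S \<Longrightarrow> is_lub L S (fjoin L S)"
proof -
  assume "S \<subseteq> A" "small k S"
  then obtain j where "is_lub L S j"
    using kframe unfolding kframe_def by (elim conjE) blast
  then show ?thesis unfolding fjoin_def using the_lub_eq[OF antisymmetric] by simp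
qed

lemma meet_glb: "a \<in> A \<Longrightarrow> b \<in> A \<Longrightarrow> is_glb L {a, b} (a \<sqinter> b)"
proof -
  assume "a \<in> A" "b \<in> A"
  then obtain m where "is_glb L {a, b} m"
    using kframe unfolding kframe_def by (elim conjE) blast
  then show ?thesis unfolding fmeet_def using the_glb_eq[OF antisymmetric] by simp
qed

lemma top_glb: "is_glb L {} tp"
proof -
  obtain t where "is_glb L {} t"
    using kframe unfolding kframe_def by (elim conjE) blast
  then show ?thesis unfolding ftop_def using the_glb_eq[OF antisymmetric] by simp
qed

lemma meet_fjoin_distrib:
  "a \<in> A \<Longrightarrow> S \<subseteq> A \<Longrightarrow> small k S \<Longrightarrow> a \<sqinter> fjoin L S = fjoin L ((\<lambda>s. a \<sqinter> s) ` S)"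
  using kframe unfolding kframe_def by (elim conjE) blast

lemma fjoin_closed: "S \<subseteq> A \<Longrightarrow> small k S \<Longrightarrow> fjoin L S \<in> A"
  using fjoin_lub unfolding is_lub_def by blast
lemma fjoin_upper: "S \<subseteq> A \<Longrightarrow> small k S \<Longrightarrow> s \<in> S \<Longrightarrow> s \<sqsubseteq> fjoin L S"
  using fjoin_lub unfolding is_lub_def by blast
lemma fjoin_least:
  "S \<subseteq> A \<Longrightarrow> small k S \<Longrightarrow> u \<in> A \<Longrightarrow> (\<And>s. s \<in> S \<Longrightarrow> s \<sqsubseteq> u) \<Longrightarrow> fjoin L S \<sqsubseteq> u"
  using fjoin_lub unfolding is_lub_def by blast

lemma meet_closed [simp]: "a \<in> A \<Longrightarrow> b \<in> A \<Longrightarrow> a \<sqinter> b \<in> A"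
  using meet_glb unfolding is_glb_def by blast
lemma meet_lower1: "a \<in> A \<Longrightarrow> b \<in> A \<Longrightarrow> a \<sqinter> b \<sqsubseteq> a"
  using meet_glb unfolding is_glb_def by blast
lemma meet_lower2: "a \<in> A \<Longrightarrow> b \<in> A \<Longrightarrow> a \<sqinter> b \<sqsubseteq> b"
  using meet_glb unfolding is_glb_def by blast
lemma meet_greatest: "a \<in> A \<Longrightarrow> b \<in> A \<Longrightarrow> u \<in> A \<Longrightarrow> u \<sqsubseteq> a \<Longrightarrow> u \<sqsubseteq> b \<Longrightarrow> u \<sqsubseteq> a \<sqinter> b"
  using meet_glb unfolding is_glb_def by blast

lemma join_closed [simp]: "a \<in> A \<Longrightarrow> b \<in> A \<Longrightarrow> a \<squnion> b \<in> A"
  by (rule fjoin_closed) (auto simp: small_pair)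
lemma join_upper1: "a \<in> A \<Longrightarrow> b \<in> A \<Longrightarrow> a \<sqsubseteq> a \<squnion> b"
  by (rule fjoin_upper) (auto simp: small_pair)
lemma join_upper2: "a \<in> A \<Longrightarrow> b \<in> A \<Longrightarrow> b \<sqsubseteq> a \<squnion> b"
  by (rule fjoin_upper) (auto simp: small_pair)
lemma join_least: "a \<in> A \<Longrightarrow> b \<in> A \<Longrightarrow> u \<in> A \<Longrightarrow> a \<sqsubseteq> u \<Longrightarrow> b \<sqsubseteq> u \<Longrightarrow> a \<squnion> b \<sqsubseteq> u"
  by (rule fjoin_least) (auto simp: small_pair)

lemma bot_closed [simp]: "bt \<in> A"
  unfolding fbot_def by (rule fjoin_closed) (simp_all add: small_finite[OF cinfinite])
lemma bot_least: "u \<in> A \<Longrightarrow> bt \<sqsubseteq> u"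
  unfolding fbot_def by (rule fjoin_least) (simp_all add: small_finite[OF cinfinite])
lemma top_closed [simp]: "tp \<in> A"
  using top_glb unfolding is_glb_def by blast
lemma top_greatest: "u \<in> A \<Longrightarrow> u \<sqsubseteq> tp"
  using top_glb unfolding is_glb_def by blast

lemma meet_commute: "a \<in> A \<Longrightarrow> b \<in> A \<Longrightarrow> a \<sqinter> b = b \<sqinter> a"
  by (rule leq_antisym) (simp_all add: meet_greatest meet_lower1 meet_lower2)

lemma meet_assoc: "a \<in> A \<Longrightarrow> b \<in> A \<Longrightarrow> c \<in> A \<Longrightarrow> a \<sqinter> (b \<sqinter> c) = a \<sqinter> b \<sqinter> c"
  by (rule leq_antisym)
    (simp_all add: meet_greatest meet_lower1 meet_lower2 leq_trans[OF _ _ _ meet_lower1]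
      leq_trans[OF _ _ _ meet_lower2])

lemma join_assoc: "a \<in> A \<Longrightarrow> b \<in> A \<Longrightarrow> c \<in> A \<Longrightarrow> a \<squnion> (b \<squnion> c) = a \<squnion> b \<squnion> c"
  by (rule leq_antisym)
    (simp_all add: join_least join_upper1 join_upper2 leq_trans[OF _ _ _ _ join_upper1]
      leq_trans[OF _ _ _ _ join_upper2])

lemma meet_absorb: "a \<in> A \<Longrightarrow> b \<in> A \<Longrightarrow> a \<sqsubseteq> b \<Longrightarrow> a \<sqinter> b = a"
  by (rule leq_antisym) (simp_all add: meet_greatest meet_lower1 leq_refl)
lemma join_absorb: "a \<in> A \<Longrightarrow> b \<in> A \<Longrightarrow> a \<sqsubseteq> b \<Longrightarrow> a \<squnion> b = b"
  by (rule leq_antisym) (simp_all add: join_least join_upper2 leq_refl)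

lemma bot_meet [simp]: "u \<in> A \<Longrightarrow> bt \<sqinter> u = bt"
  by (simp add: bot_least meet_absorb)
lemma meet_top [simp]: "u \<in> A \<Longrightarrow> u \<sqinter> tp = u"
  by (simp add: top_greatest meet_absorb)
lemma bot_join [simp]: "u \<in> A \<Longrightarrow> bt \<squnion> u = u"
  by (simp add: bot_least join_absorb)
lemma join_bot [simp]: "u \<in> A \<Longrightarrow> u \<squnion> bt = u"
  by (metis bot_join insert_commute)
lemma top_join [simp]: "u \<in> A \<Longrightarrow> tp \<squnion> u = tp"
  by (metis join_absorb insert_commute top_greatest top_closed)

lemma meet_idem [simp]: "u \<in> A \<Longrightarrow> u \<sqinter> u = u"
  by (simp add: leq_refl meet_absorb)
lemma fjoin_singleton [simp]: "u \<in> A \<Longrightarrow> fjoin L {u} = u"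
  using join_absorb[OF _ _ leq_refl, of u] by simp

lemma meet_join_distrib: "a \<in> A \<Longrightarrow> b \<in> A \<Longrightarrow> c \<in> A \<Longrightarrow> a \<sqinter> (b \<squnion> c) = a \<sqinter> b \<squnion> a \<sqinter> c"
  using meet_fjoin_distrib[of a "{b, c}"] by (simp add: small_pair)

lemma meet_join_distrib_right: "a \<in> A \<Longrightarrow> b \<in> A \<Longrightarrow> c \<in> A \<Longrightarrow> (b \<squnion> c) \<sqinter> a = b \<sqinter> a \<squnion> c \<sqinter> a"
  by (simp add: meet_join_distrib meet_commute)

lemma join_meet_distrib: "x \<in> A \<Longrightarrow> y \<in> A \<Longrightarrow> j \<in> A \<Longrightarrow> (x \<squnion> j) \<sqinter> (y \<squnion> j) = x \<sqinter> y \<squnion> j"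
proof -
  assume h: "x \<in> A" "y \<in> A" "j \<in> A"
  have "(x \<squnion> j) \<sqinter> (y \<squnion> j) = x \<sqinter> (y \<squnion> j) \<squnion> j \<sqinter> (y \<squnion> j)"
    using h by (simp add: meet_join_distrib_right)
  also have "j \<sqinter> (y \<squnion> j) = j"
    using h by (simp add: join_upper2 meet_absorb)
  also have "x \<sqinter> (y \<squnion> j) = x \<sqinter> y \<squnion> x \<sqinter> j"
    using h by (simp add: meet_join_distrib)
  also have "x \<sqinter> y \<squnion> x \<sqinter> j \<squnion> j = x \<sqinter> y \<squnion> (x \<sqinter> j \<squnion> j)"
    using h by (simp add: join_assoc)
  also have "x \<sqinter> j \<squnion> j = j"
    using h by (simp add: join_absorb meet_lower2)
  finally show ?thesis .
qed

lemma meet_mono: "a \<in> A \<Longrightarrow> x \<in> A \<Longrightarrow> y \<in> A \<Longrightarrow> x \<sqsubseteq> y \<Longrightarrow> a \<sqinter> x \<sqsubseteq> a \<sqinter> y"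
  by (rule meet_greatest) (simp_all add: meet_lower1 leq_trans[OF _ _ _ meet_lower2])

lemma join_mono: "a \<in> A \<Longrightarrow> b \<in> A \<Longrightarrow> c \<in> A \<Longrightarrow> d \<in> A \<Longrightarrow> a \<sqsubseteq> b \<Longrightarrow> c \<sqsubseteq> d \<Longrightarrow> a \<squnion> c \<sqsubseteq> b \<squnion> d"
  by (rule join_least)
    (simp_all add: leq_trans[OF _ _ _ _ join_upper1] leq_trans[OF _ _ _ _ join_upper2])

end

locale kappa_frame_congruence = kappa_frame k L for k :: "'k rel" and L :: "'a frm" +
  fixes C :: "('a \<times> 'a) set"
  assumes congruence: "kcongruence k L C"
begin

abbreviation cls where "cls x \<equiv> C `` {x}"
abbreviation Q where "Q \<equiv> quot L C"

lemma equiv_cong: "equiv A C"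
  using congruence unfolding kcongruence_def by blast

lemma cong_refl: "x \<in> A \<Longrightarrow> (x, x) \<in> C"
  using equiv_cong unfolding equiv_def refl_on_def by blast
lemma cong_sym: "(x, y) \<in> C \<Longrightarrow> (y, x) \<in> C"
  using equiv_cong unfolding equiv_def sym_def by blast
lemma cong_trans: "(x, y) \<in> C \<Longrightarrow> (y, z) \<in> C \<Longrightarrow> (x, z) \<in> C"
  using equiv_cong unfolding equiv_def trans_def by blast

lemma cong_meet: "(a, b) \<in> C \<Longrightarrow> (c, d) \<in> C \<Longrightarrow> (a \<sqinter> c, b \<sqinter> d) \<in> C"
  using congruence unfolding kcongruence_def by blast

lemma cong_join: "(a, b) \<in> C \<Longrightarrow> (c, d) \<in> C \<Longrightarrow> (a \<squnion> c, b \<squnion> d) \<in> C"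
proof -
  assume "(a, b) \<in> C" "(c, d) \<in> C"
  then have "{(a, b), (c, d)} \<subseteq> C \<and> small k {(a, b), (c, d)}"
    by (simp add: small_pair)
  moreover have "\<forall>S. S \<subseteq> C \<and> small k S \<longrightarrow> (fjoin L (fst ` S), fjoin L (snd ` S)) \<in> C"
    using congruence unfolding kcongruence_def by blast
  ultimately have "(fjoin L (fst ` {(a, b), (c, d)}), fjoin L (snd ` {(a, b), (c, d)})) \<in> C"
    by blast
  then show ?thesis by simp
qed

lemma carrier_quot: "carrier Q = A // C"
  by (simp add: quot_def)

lemma class_in_quot: "x \<in> A \<Longrightarrow> cls x \<in> carrier Q"
  by (simp add: carrier_quot quotientI)

lemma quot_cases: "X \<in> carrier Q \<Longrightarrow> (\<And>x. x \<in> A \<Longrightarrow> X = cls x \<Longrightarrow> P) \<Longrightarrow> P"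
  by (auto simp: carrier_quot elim: quotientE)

lemma class_eq_iff: "x \<in> A \<Longrightarrow> y \<in> A \<Longrightarrow> cls x = cls y \<longleftrightarrow> (x, y) \<in> C"
  using eq_equiv_class_iff[OF equiv_cong] by blast

lemma quot_le_iff: "x \<in> A \<Longrightarrow> y \<in> A \<Longrightarrow> le Q (cls x) (cls y) \<longleftrightarrow> (x \<sqinter> y, x) \<in> C"
proof
  assume "le Q (cls x) (cls y)"
  then obtain a b where ab: "(x, a) \<in> C" "(y, b) \<in> C" "(a \<sqinter> b, a) \<in> C"
    by (auto simp: quot_def)
  then have "(x \<sqinter> y, a) \<in> C" using cong_meet cong_trans by blast
  then show "(x \<sqinter> y, x) \<in> C" using ab cong_sym cong_trans by blast
next
  assume "x \<in> A" "y \<in> A" "(x \<sqinter> y, x) \<in> C"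
  then show "le Q (cls x) (cls y)" unfolding quot_def using cong_refl by auto
qed

lemma quot_antisymmetric: "antisymmetric_on_carrier Q"
  unfolding antisymmetric_on_carrier_def
proof (intro ballI impI)
  fix X Y assume "X \<in> carrier Q" "Y \<in> carrier Q" and le: "le Q X Y \<and> le Q Y X"
  then obtain x y where xy: "x \<in> A" "y \<in> A" "X = cls x" "Y = cls y"
    by (metis quot_cases)
  then have "(x \<sqinter> y, x) \<in> C" "(y \<sqinter> x, y) \<in> C"
    using le quot_le_iff by auto
  then have "(x, y) \<in> C" using xy meet_commute cong_sym cong_trans by metis
  then show "X = Y" using xy class_eq_iff by blast
qed

lemma ball_quot_iff: "(\<forall>X\<in>carrier Q. P X) \<longleftrightarrow> (\<forall>x\<in>A. P (cls x))"
  by (metis class_in_quot quot_cases)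

lemma quot_meet: "x \<in> A \<Longrightarrow> y \<in> A \<Longrightarrow> fmeet Q (cls x) (cls y) = cls (x \<sqinter> y)"
proof -
  assume xy: "x \<in> A" "y \<in> A"
  have "le Q (cls u) (cls (x \<sqinter> y))"
    if u: "u \<in> A" "le Q (cls u) (cls x)" "le Q (cls u) (cls y)" for u
  proof -
    have "(u \<sqinter> x, u) \<in> C" "(u \<sqinter> y, u) \<in> C" using u xy quot_le_iff by auto
    then have "(u \<sqinter> x \<sqinter> y, u) \<in> C"
      using cong_meet[OF _ cong_refl[OF xy(2)]] cong_trans by blast
    then show ?thesis using u xy by (simp add: quot_le_iff meet_assoc)
  qed
  moreover have "le Q (cls (x \<sqinter> y)) (cls x)" "le Q (cls (x \<sqinter> y)) (cls y)"
    using xy by (simp_all add: quot_le_iff meet_lower1 meet_lower2 meet_absorb cong_refl)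
  ultimately have "is_glb Q {cls x, cls y} (cls (x \<sqinter> y))"
    unfolding is_glb_def ball_quot_iff using xy by (simp add: class_in_quot)
  then show ?thesis unfolding fmeet_def by (rule the_glb_eq[OF quot_antisymmetric])
qed

lemma quot_bot: "fbot Q = cls bt"
proof -
  have "is_lub Q {} (cls bt)"
    unfolding is_lub_def ball_quot_iff by (simp add: class_in_quot quot_le_iff cong_refl)
  then show ?thesis unfolding fbot_def fjoin_def by (rule the_lub_eq[OF quot_antisymmetric])
qed

lemma class_dcong_iff:
  assumes "x \<in> A" "y \<in> A"
  shows "(cls x, cls y) \<in> dcong Q \<longleftrightarrow> (\<forall>z\<in>A. (x \<sqinter> z, bt) \<in> C \<longleftrightarrow> (y \<sqinter> z, bt) \<in> C)"
proof -
  have "fmeet Q (cls w) (cls z) = fbot Q \<longleftrightarrow> (w \<sqinter> z, bt) \<in> C" if "w \<in> A" "z \<in> A" for w z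
    using that by (simp add: quot_meet quot_bot class_eq_iff)
  then show ?thesis
    unfolding dcong_def ball_quot_iff using assms by (simp add: class_in_quot)
qed

lemma d_reduced_quot_iff:
  "d_reduced Q \<longleftrightarrow> (\<forall>x\<in>A. \<forall>y\<in>A. (\<forall>z\<in>A. (x \<sqinter> z, bt) \<in> C \<longleftrightarrow> (y \<sqinter> z, bt) \<in> C) \<longrightarrow> (x, y) \<in> C)"
proof -
  have "dcong Q \<subseteq> carrier Q \<times> carrier Q" "Id_on (carrier Q) \<subseteq> dcong Q"
    unfolding dcong_def by auto
  then have "d_reduced Q \<longleftrightarrow> (\<forall>X\<in>carrier Q. \<forall>Y\<in>carrier Q. (X, Y) \<in> dcong Q \<longrightarrow> X = Y)"
    unfolding d_reduced_def by auto
  then show ?thesis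
    unfolding ball_quot_iff by (simp add: class_dcong_iff class_eq_iff)
qed

lemma cong_meet_if_annihilators_le:
  assumes "boolean L" "x \<in> A" "y \<in> A"
    and ann: "\<forall>z\<in>A. (y \<sqinter> z, bt) \<in> C \<longrightarrow> (x \<sqinter> z, bt) \<in> C"
  shows "(x, x \<sqinter> y) \<in> C"
proof -
  obtain y' where y': "y' \<in> A" "y \<sqinter> y' = bt" "y \<squnion> y' = tp"
    using assms(1,3) unfolding boolean_def by blast
  have "(x \<sqinter> y', bt) \<in> C" using ann y' cong_refl by simp
  then have "(x \<sqinter> y \<squnion> x \<sqinter> y', x \<sqinter> y \<squnion> bt) \<in> C"
    using assms(2,3) cong_join cong_refl meet_closed by blast
  moreover have "x \<sqinter> y \<squnion> x \<sqinter> y' = x"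
    using assms(2,3) y' by (simp add: meet_join_distrib[symmetric])
  ultimately show ?thesis using assms(2,3) by simp
qed

lemma d_reduced_quot_if_boolean: "boolean L \<Longrightarrow> d_reduced Q"
proof -
  assume "boolean L"
  have "(x, y) \<in> C"
    if "x \<in> A" "y \<in> A" "\<forall>z\<in>A. (x \<sqinter> z, bt) \<in> C \<longleftrightarrow> (y \<sqinter> z, bt) \<in> C" for x y
  proof -
    have "(x, x \<sqinter> y) \<in> C" "(y, y \<sqinter> x) \<in> C"
      using that \<open>boolean L\<close> cong_meet_if_annihilators_le by auto
    then show ?thesis using that meet_commute cong_sym cong_trans by metis
  qed
  then show ?thesis unfolding d_reduced_quot_iff by blast
qed

end

definition kideal :: "'k rel \<Rightarrow> 'a frm \<Rightarrow> 'a set \<Rightarrow> bool" where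
  "kideal k L I \<longleftrightarrow> I \<subseteq> carrier L \<and>
     (\<forall>x\<in>carrier L. \<forall>i\<in>I. le L x i \<longrightarrow> x \<in> I) \<and>
     (\<forall>S. S \<subseteq> I \<and> small k S \<longrightarrow> fjoin L S \<in> I)"

definition ideal_cong :: "'a frm \<Rightarrow> 'a set \<Rightarrow> ('a \<times> 'a) set" where
  "ideal_cong L I = {(x, y). x \<in> carrier L \<and> y \<in> carrier L \<and>
     (\<exists>i\<in>I. fjoin L {x, i} = fjoin L {y, i})}"

definition annihilator :: "'a frm \<Rightarrow> 'a \<Rightarrow> 'a set" where
  "annihilator L a = {x \<in> carrier L. fmeet L a x = fbot L}"

context kappa_frame
begin

lemma kideal_subset: "kideal k L I \<Longrightarrow> I \<subseteq> A"
  unfolding kideal_def by blast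

lemma kideal_down: "kideal k L I \<Longrightarrow> x \<in> A \<Longrightarrow> i \<in> I \<Longrightarrow> x \<sqsubseteq> i \<Longrightarrow> x \<in> I"
  unfolding kideal_def by blast

lemma kideal_fjoin: "kideal k L I \<Longrightarrow> S \<subseteq> I \<Longrightarrow> small k S \<Longrightarrow> fjoin L S \<in> I"
  unfolding kideal_def by blast

lemma kideal_bot: "kideal k L I \<Longrightarrow> bt \<in> I"
  unfolding fbot_def by (rule kideal_fjoin) (simp_all add: small_finite[OF cinfinite])

lemma kideal_join: "kideal k L I \<Longrightarrow> i \<in> I \<Longrightarrow> j \<in> I \<Longrightarrow> i \<squnion> j \<in> I"
  by (rule kideal_fjoin) (simp_all add: small_pair)

lemma join_eq_join_larger:
  "x \<in> A \<Longrightarrow> y \<in> A \<Longrightarrow> i \<in> A \<Longrightarrow> j \<in> A \<Longrightarrow> i \<sqsubseteq> j \<Longrightarrow> x \<squnion> i = y \<squnion> i \<Longrightarrow> x \<squnion> j = y \<squnion> j"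
  by (metis join_absorb join_assoc)

lemma fjoin_join_le:
  assumes f: "f ` S \<subseteq> A" and g: "g ` S \<subseteq> A" and j: "j \<in> A" and S: "small k S"
    and le: "\<And>p. p \<in> S \<Longrightarrow> f p \<sqsubseteq> g p \<squnion> j"
  shows "fjoin L (f ` S) \<squnion> j \<sqsubseteq> fjoin L (g ` S) \<squnion> j"
proof -
  let ?Y = "fjoin L (g ` S)"
  have Y: "?Y \<in> A" using fjoin_closed[OF g small_image[OF S]] .
  have YJ: "?Y \<squnion> j \<in> A" using Y j by simp
  have "f p \<sqsubseteq> ?Y \<squnion> j" if p: "p \<in> S" for p
  proof -
    have fp: "f p \<in> A" and gp: "g p \<in> A" using f g p by auto
    have "g p \<sqsubseteq> ?Y" using fjoin_upper[OF g small_image[OF S]] p by blast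
    then have "g p \<squnion> j \<sqsubseteq> ?Y \<squnion> j" using join_mono[OF gp Y j j _ leq_refl[OF j]] by blast
    then show ?thesis using leq_trans[OF fp _ YJ le[OF p]] gp j by simp
  qed
  then have "fjoin L (f ` S) \<sqsubseteq> ?Y \<squnion> j"
    using fjoin_least[OF f small_image[OF S] YJ] by blast
  then show ?thesis
    using join_least[OF fjoin_closed[OF f small_image[OF S]] j YJ _ join_upper2[OF Y j]] by blast
qed

lemma equiv_ideal_cong:
  assumes I: "kideal k L I"
  shows "equiv A (ideal_cong L I)"
proof (rule equivI)
  show "ideal_cong L I \<subseteq> A \<times> A"
    unfolding ideal_cong_def by auto
  show "refl_on A (ideal_cong L I)"
    unfolding refl_on_def ideal_cong_def using kideal_bot[OF I] by auto
  show "sym (ideal_cong L I)"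
    unfolding sym_def ideal_cong_def by (auto dest: sym)
  show "trans (ideal_cong L I)"
    unfolding trans_def
  proof (intro allI impI)
    fix x y z assume "(x, y) \<in> ideal_cong L I" "(y, z) \<in> ideal_cong L I"
    then obtain i j where ij: "x \<in> A" "y \<in> A" "z \<in> A" "i \<in> I" "j \<in> I"
      "x \<squnion> i = y \<squnion> i" "y \<squnion> j = z \<squnion> j"
      unfolding ideal_cong_def by blast
    then have "i \<in> A" "j \<in> A" using kideal_subset[OF I] by auto
    with ij have "x \<squnion> (i \<squnion> j) = z \<squnion> (i \<squnion> j)"
      using join_eq_join_larger join_upper1 join_upper2 join_closed by metis
    then show "(x, z) \<in> ideal_cong L I"
      unfolding ideal_cong_def using ij kideal_join[OF I] by blast
  qed
qed

lemma ideal_cong_meet: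
  assumes I: "kideal k L I"
    and "(x, y) \<in> ideal_cong L I" "(c, d) \<in> ideal_cong L I"
  shows "(x \<sqinter> c, y \<sqinter> d) \<in> ideal_cong L I"
proof -
  obtain i j where ij: "x \<in> A" "y \<in> A" "c \<in> A" "d \<in> A" "i \<in> I" "j \<in> I"
    "x \<squnion> i = y \<squnion> i" "c \<squnion> j = d \<squnion> j"
    using assms(2,3) unfolding ideal_cong_def by blast
  then have "i \<in> A" "j \<in> A" using kideal_subset[OF I] by auto
  with ij have "x \<squnion> (i \<squnion> j) = y \<squnion> (i \<squnion> j)" "c \<squnion> (i \<squnion> j) = d \<squnion> (i \<squnion> j)"
    using join_eq_join_larger join_upper1 join_upper2 join_closed by metis+
  then have "x \<sqinter> c \<squnion> (i \<squnion> j) = y \<sqinter> d \<squnion> (i \<squnion> j)"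
    using ij \<open>i \<in> A\<close> \<open>j \<in> A\<close> by (simp flip: join_meet_distrib)
  then show ?thesis
    unfolding ideal_cong_def using ij kideal_join[OF I] by auto
qed

lemma ideal_cong_fjoin:
  assumes I: "kideal k L I" and S: "S \<subseteq> ideal_cong L I" "small k S"
  shows "(fjoin L (fst ` S), fjoin L (snd ` S)) \<in> ideal_cong L I"
proof -
  have "\<forall>p\<in>S. \<exists>i. i \<in> I \<and> fst p \<squnion> i = snd p \<squnion> i"
    using S(1) unfolding ideal_cong_def by fastforce
  from bchoice[OF this] obtain w where w: "\<forall>p\<in>S. w p \<in> I \<and> fst p \<squnion> w p = snd p \<squnion> w p" ..
  define j where "j = fjoin L (w ` S)"
  have sub: "fst ` S \<subseteq> A" "snd ` S \<subseteq> A" "w ` S \<subseteq> A"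
    using S(1) w kideal_subset[OF I] unfolding ideal_cong_def by auto
  have "w ` S \<subseteq> I" using w by blast
  then have "j \<in> I"
    unfolding j_def by (rule kideal_fjoin[OF I _ small_image[OF S(2)]])
  then have j: "j \<in> I" "j \<in> A" using kideal_subset[OF I] by auto
  have eq: "fst p \<squnion> j = snd p \<squnion> j" if p: "p \<in> S" for p
  proof (rule join_eq_join_larger)
    show "w p \<sqsubseteq> j"
      unfolding j_def using fjoin_upper[OF sub(3) small_image[OF S(2)]] p by blast
    show "fst p \<squnion> w p = snd p \<squnion> w p" using w p by blast
  qed (use sub p j in auto)
  have le: "fst p \<sqsubseteq> snd p \<squnion> j" "snd p \<sqsubseteq> fst p \<squnion> j" if p: "p \<in> S" for p
  proof -
    have "fst p \<in> A" "snd p \<in> A" using sub p by auto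
    then show "fst p \<sqsubseteq> snd p \<squnion> j" "snd p \<sqsubseteq> fst p \<squnion> j"
      using eq[OF p] join_upper1 j(2) by metis+
  qed
  have X: "fjoin L (fst ` S) \<in> A" and Y: "fjoin L (snd ` S) \<in> A"
    using fjoin_closed small_image[OF S(2)] sub by auto
  have "fjoin L (fst ` S) \<squnion> j = fjoin L (snd ` S) \<squnion> j"
    using leq_antisym[OF join_closed[OF X j(2)] join_closed[OF Y j(2)]
        fjoin_join_le[OF sub(1,2) j(2) S(2) le(1)] fjoin_join_le[OF sub(2,1) j(2) S(2) le(2)]] .
  then show ?thesis
    unfolding ideal_cong_def using X Y j(1) by blast
qed

lemma kcongruence_ideal_cong:
  assumes I: "kideal k L I"
  shows "kcongruence k L (ideal_cong L I)"
proof -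
  have "(tp, tp) \<in> ideal_cong L I"
    using equiv_ideal_cong[OF I] top_closed unfolding equiv_def refl_on_def by blast
  then show ?thesis
    unfolding kcongruence_def
    using equiv_ideal_cong[OF I] ideal_cong_meet[OF I] ideal_cong_fjoin[OF I] by blast
qed

lemma ideal_cong_bot_iff:
  assumes I: "kideal k L I" and x: "x \<in> A"
  shows "(x, bt) \<in> ideal_cong L I \<longleftrightarrow> x \<in> I"
proof
  assume "(x, bt) \<in> ideal_cong L I"
  then obtain i where i: "i \<in> I" "x \<squnion> i = i"
    using kideal_subset[OF I] unfolding ideal_cong_def by auto
  then have "x \<sqsubseteq> i" using x join_upper1 kideal_subset[OF I] by (metis subsetD)
  then show "x \<in> I" by (rule kideal_down[OF I x i(1)])
next
  assume "x \<in> I"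
  then show "(x, bt) \<in> ideal_cong L I"
    unfolding ideal_cong_def using x by (auto intro!: bexI[of _ x])
qed

lemma kideal_annihilator:
  assumes a: "a \<in> A"
  shows "kideal k L (annihilator L a)"
  unfolding kideal_def
proof (intro conjI allI impI ballI)
  show "annihilator L a \<subseteq> A" unfolding annihilator_def by blast
next
  fix x i assume "x \<in> A" "i \<in> annihilator L a" "x \<sqsubseteq> i"
  then have "a \<sqinter> x \<sqsubseteq> bt"
    using a meet_mono[of a x i] unfolding annihilator_def by auto
  then show "x \<in> annihilator L a"
    using a \<open>x \<in> A\<close> bot_least leq_antisym unfolding annihilator_def by auto
next
  fix S assume S: "S \<subseteq> annihilator L a \<and> small k S"
  then have "(\<lambda>s. a \<sqinter> s) ` S \<subseteq> {bt}" "S \<subseteq> A"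
    unfolding annihilator_def by auto
  then have "fjoin L ((\<lambda>s. a \<sqinter> s) ` S) = bt"
    using S a by (intro leq_antisym fjoin_least fjoin_closed bot_least small_image)
      (auto simp: leq_refl)
  then show "fjoin L S \<in> annihilator L a"
    using S a \<open>S \<subseteq> A\<close> meet_fjoin_distrib fjoin_closed unfolding annihilator_def by auto
qed

lemma boolean_if_quotients_d_reduced:
  assumes "\<forall>C. kcongruence k L C \<longrightarrow> d_reduced (quot L C)"
  shows "boolean L"
  unfolding boolean_def
proof
  fix a assume a: "a \<in> A"
  let ?I = "annihilator L a"
  let ?C = "ideal_cong L ?I"
  have I: "kideal k L ?I" by (rule kideal_annihilator[OF a])
  interpret quotient: kappa_frame_congruence k L ?C
    by unfold_locales (rule kcongruence_ideal_cong[OF I])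
  have "(x, bt) \<in> ?C \<longleftrightarrow> a \<sqinter> x = bt" if "x \<in> A" for x
    using ideal_cong_bot_iff[OF I that] that unfolding annihilator_def by simp
  then have same_annihilators: "(a \<sqinter> z, bt) \<in> ?C \<longleftrightarrow> (tp \<sqinter> z, bt) \<in> ?C"
    if "z \<in> A" for z
    using a that by (simp add: meet_assoc)
  have "d_reduced (quot L ?C)"
    using assms kcongruence_ideal_cong[OF I] by simp
  then have "(a, tp) \<in> ?C"
    by (rule quotient.d_reduced_quot_iff[THEN iffD1, rule_format, OF _ a top_closed same_annihilators])
  then obtain i where "i \<in> ?I" "a \<squnion> i = tp"
    unfolding ideal_cong_def annihilator_def by auto
  then show "\<exists>b\<in>A. a \<sqinter> b = bt \<and> a \<squnion> b = tp"
    unfolding annihilator_def by auto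
qed

end

theorem mainTheorem16:
  fixes k :: "'k rel" and L :: "'a frm"
  assumes "Cinfinite k" and "regularCard k"
    and "kframe k L"
  shows "(\<forall>C. kcongruence k L C \<longrightarrow> d_reduced (quot L C)) \<longleftrightarrow> boolean L"
proof -
  interpret kappa_frame k L using assms(1,3) by (rule kappa_frame.intro)
  show ?thesis
  proof
    show "boolean L" if "\<forall>C. kcongruence k L C \<longrightarrow> d_reduced (quot L C)"
      using that by (rule boolean_if_quotients_d_reduced)
    show "\<forall>C. kcongruence k L C \<longrightarrow> d_reduced (quot L C)" if "boolean L"
    proof (intro allI impI)
      fix C assume "kcongruence k L C"
      then interpret kappa_frame_congruence k L C
        using assms(1,3) by (intro kappa_frame_congruence.intro kappa_frame.intro
            kappa_frame_congruence_axioms.intro)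
      show "d_reduced (quot L C)" using \<open>boolean L\<close> by (rule d_reduced_quot_if_boolean)
    qed
  qed
qed

end
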